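(* Let $T$ be a string of length $n$ over an alphabet $\Sigma$ of size $\sigma\ge 2$. For any $1<i\le j\le n$, $|\mathsf{MUS}(T[i-1..j])\bigtriangleup\mathsf{MUS}(T[i..j])|\le 4$ and $-1\le|\mathsf{MUS}(T[i-1..j])|-|\mathsf{MUS}(T[i..j])|\le 2$. Furthermore, these bounds are tight: for any $\sigma\ge 3$ and any $i,j$ with $1<i\le j\le n$ and $j-i+1\ge 5$, there exist strings $T$ over an alphabet of size $\sigma$ attaining $|\mathsf{MUS}(T[i-1..j])\bigtriangleup\mathsf{MUS}(T[i..j])|=4$, strings attaining $|\mathsf{MUS}(T[i-1..j])|-|\mathsf{MUS}(T[i..j])|=2$, and strings attaining $|\mathsf{MUS}(T[i-1..j])|-|\mathsf{MUS}(T[i..j])|=-1$.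
   Context: $T[a..b]$ denotes the substring of $T$ from position $a$ to $b$. For a string $S$ and a string $w$, $\#\mathit{occ}_S(w)$ is the number of positions at which $w$ occurs in $S$; by convention $\#\mathit{occ}_S(\varepsilon)=|S|+1$. A substring $w$ of $S$ is unique in $S$ if $\#\mathit{occ}_S(w)=1$ and repeating in $S$ if $\#\mathit{occ}_S(w)\ge 2$. For $1\le i\le j\le n$, $\mathsf{MUS}(T[i..j])$ is the set of intervals $[s,t]$ (positions in $T$) with $i\le s\le t\le j$ such that $T[s..t]$ is unique in $T[i..j]$ and every proper substring of $T[s..t]$ (including the empty string) is repeating in $T[i..j]$. $\bigtriangleup$ denotes symmetric difference. *)

theory Defs
  imports Main "HOL-Library.Sublist"
begin

text \<open>Strings are lists; positions are 1-based as in the paper: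
  T[a..b] is the substring from position a to position b (inclusive).\<close>
definition substr :: "'a list \<Rightarrow> nat \<Rightarrow> nat \<Rightarrow> 'a list" where
  "substr T a b = take (Suc b - a) (drop (a - 1) T)"

text \<open>Number of occurrences of w in S (0-based starting offsets).
  For w = [] this is |S| + 1, matching the paper's convention.\<close>
definition occ :: "'a list \<Rightarrow> 'a list \<Rightarrow> nat" where
  "occ S w = card {p. p + length w \<le> length S \<and> take (length w) (drop p S) = w}"

definition MUS :: "'a list \<Rightarrow> nat \<Rightarrow> nat \<Rightarrow> (nat \<times> nat) set" where
  "MUS T i j = {(s, t). i \<le> s \<and> s \<le> t \<and> t \<le> j
      \<and> occ (substr T i j) (substr T s t) = 1
      \<and> (\<forall>u. strict_sublist u (substr T s t) \<longrightarrow> occ (substr T i j) u \<ge> 2)}"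

definition symdiff :: "'b set \<Rightarrow> 'b set \<Rightarrow> 'b set" where
  "symdiff A B = (A - B) \<union> (B - A)"

end

(* Write T[i-1..j] = c S with S = T[i..j] and compare the MUSs of c S with those of S, shifted
   by one position.  Prepending c only adds an occurrence at the front, so a factor stops being
   unique only if it is a prefix of c S that is unique in S.  Prefixes of c S that are unique in S
   all occur at the same position of S, and MUSs are not nested, so at most one MUS is lost.  A
   new MUS of c S either starts at the front or has a maximal proper factor that is such a prefix;
   each of these three cases admits at most one MUS, so at most three are gained.  If some prefix
   of c S is unique in S, the shortest one is a MUS of S that is lost; hence at most one MUS is
   gained when none is lost.  This gives the bounds 4, -1 and 2 over any alphabet.  The words
   a c^m a b b and b b a^m b b, padded to length n, attain them. *)

theory Submission
  imports Defs
begin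

section \<open>Occurrences\<close>

definition occurs_at :: "'a list \<Rightarrow> 'a list \<Rightarrow> nat \<Rightarrow> bool" where
  "occurs_at W w p \<longleftrightarrow> p + length w \<le> length W \<and> take (length w) (drop p W) = w"

lemma occ_eq_card_occurs_at: "occ W w = card {p. occurs_at W w p}"
  unfolding occ_def occurs_at_def by simp

lemma finite_occurs_at: "finite {p. occurs_at W w p}"
  by (rule finite_subset[of _ "{..length W}"]) (auto simp: occurs_at_def)

lemma occ_Nil: "occ W [] = Suc (length W)"
  unfolding occ_def by simp

lemma occurs_at_infix:
  assumes "occurs_at W (x @ u @ y) p"
  shows "occurs_at W u (p + length x)"
proof -
  have "take (length x + (length u + length y)) (drop p W) = x @ u @ y"
    using assms by (simp add: occurs_at_def)
  then have "drop (length x) (take (length x + (length u + length y)) (drop p W)) = u @ y"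
    by simp
  then have "take (length u + length y) (drop (p + length x) W) = u @ y"
    by (simp add: drop_take add.commute)
  then have "take (length u) (take (length u + length y) (drop (p + length x) W)) = u"
    by simp
  then have "take (length u) (drop (p + length x) W) = u"
    by (simp add: min_def)
  then show ?thesis
    using assms by (simp add: occurs_at_def)
qed

lemma occ_antimono:
  assumes "sublist u v"
  shows "occ W v \<le> occ W u"
proof -
  obtain x y where v: "v = x @ u @ y"
    using assms by (auto simp: sublist_def)
  have "card {p. occurs_at W v p} \<le> card {p. occurs_at W u p}"
  proof (rule card_inj_on_le[where f = "\<lambda>p. p + length x"])
    show "inj_on (\<lambda>p. p + length x) {p. occurs_at W v p}"
      by (simp add: inj_on_def)
    show "(\<lambda>p. p + length x) ` {p. occurs_at W v p} \<subseteq> {p. occurs_at W u p}"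
      using occurs_at_infix v by blast
  qed (rule finite_occurs_at)
  then show ?thesis
    by (simp add: occ_eq_card_occurs_at)
qed

lemma occ_pos: "occurs_at W w p \<Longrightarrow> 0 < occ W w"
  unfolding occ_eq_card_occurs_at by (rule card_gt_0_iff[THEN iffD2]) (auto intro: finite_occurs_at)

lemma occ_ge_2I:
  assumes "occurs_at W w p" "occurs_at W w q" "p \<noteq> q"
  shows "2 \<le> occ W w"
proof -
  have "card {p, q} \<le> card {p. occurs_at W w p}"
    using assms by (intro card_mono finite_occurs_at) auto
  then show ?thesis
    using assms(3) by (simp add: occ_eq_card_occurs_at)
qed

lemma occ_eq_1D: "occ W w = 1 \<Longrightarrow> occurs_at W w p \<Longrightarrow> occurs_at W w q \<Longrightarrow> p = q"
  using occ_ge_2I by (metis One_nat_def Suc_1 not_less_eq_eq order_refl)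

lemma occ_eq_1E:
  assumes "occ W w = 1"
  obtains p where "occurs_at W w p"
  using assms unfolding occ_eq_card_occurs_at by (metis card_1_singletonE mem_Collect_eq singletonI)

lemma occ_eq_1I:
  assumes "occurs_at W w p" and "\<And>q. occurs_at W w q \<Longrightarrow> q = p"
  shows "occ W w = 1"
proof -
  have "{q. occurs_at W w q} = {p}"
    using assms by blast
  then show ?thesis
    by (simp add: occ_eq_card_occurs_at)
qed

lemma occurs_at_Cons:
  "occurs_at (c # S) w p \<longleftrightarrow> (p = 0 \<and> prefix w (c # S)) \<or> (0 < p \<and> occurs_at S w (p - 1))"
  by (cases p) (auto simp: occurs_at_def prefix_def simp flip: length_Cons
      dest: arg_cong[of _ _ length], metis append_take_drop_id)

lemma occ_Cons: "occ (c # S) w = occ S w + (if prefix w (c # S) then 1 else 0)"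
proof -
  have "{p. occurs_at (c # S) w p} = (if prefix w (c # S) then {0} else {}) \<union> Suc ` {p. occurs_at S w p}"
    by (auto simp: occurs_at_Cons image_iff intro: Suc_pred[symmetric])
  moreover have "card (Suc ` {p. occurs_at S w p}) = occ S w"
    by (simp add: card_image occ_eq_card_occurs_at)
  ultimately show ?thesis
    by (simp add: occ_eq_card_occurs_at card_insert_if finite_occurs_at)
qed

lemma strict_sublist_tl: "w \<noteq> [] \<Longrightarrow> strict_sublist (tl w) w"
  using sublist_tl[of w] by (cases w) (auto simp: strict_sublist_def)

lemma strict_sublist_butlast: "w \<noteq> [] \<Longrightarrow> strict_sublist (butlast w) w"
  using sublist_butlast[of w] by (cases w rule: rev_cases) (auto simp: strict_sublist_def)

lemma strict_sublist_imp_sublist_tl_or_butlast: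
  assumes "strict_sublist u w"
  shows "sublist u (tl w) \<or> sublist u (butlast w)"
proof -
  obtain x y where w: "w = x @ u @ y" and "x \<noteq> [] \<or> y \<noteq> []"
    using assms unfolding strict_sublist_def sublist_def by fastforce
  then consider "tl w = tl x @ u @ y" | "butlast w = x @ u @ butlast y"
    by (cases x) (auto simp: butlast_append)
  then show ?thesis
    by cases (metis sublist_appendI)+
qed

lemma all_strict_sublists_repeating_iff:
  assumes "w \<noteq> []"
  shows "(\<forall>u. strict_sublist u w \<longrightarrow> 2 \<le> occ W u) \<longleftrightarrow> 2 \<le> occ W (tl w) \<and> 2 \<le> occ W (butlast w)"
  using assms strict_sublist_tl strict_sublist_butlast strict_sublist_imp_sublist_tl_or_butlast
    occ_antimono[of _ "tl w" W] occ_antimono[of _ "butlast w" W]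
  by (meson order_trans)

section \<open>Minimal unique factors of a word\<close>

definition factor :: "'a list \<Rightarrow> nat \<Rightarrow> nat \<Rightarrow> 'a list" where
  "factor W s e = take (e - s) (drop s W)"

text \<open>The MUSs of a whole word W, as 0-based half-open intervals [s, e).  Minimality is
  only required of the two maximal proper factors, which suffices by
  all_strict_sublists_repeating_iff.\<close>
definition mus :: "'a list \<Rightarrow> (nat \<times> nat) set" where
  "mus W = {(s, e). s < e \<and> e \<le> length W \<and> occ W (factor W s e) = 1
      \<and> 2 \<le> occ W (factor W (Suc s) e) \<and> 2 \<le> occ W (factor W s (e - 1))}"

lemma occurs_at_factor: "s \<le> e \<Longrightarrow> e \<le> length W \<Longrightarrow> occurs_at W (factor W s e) s"
  by (simp add: occurs_at_def factor_def)

lemma length_factor: "e \<le> length W \<Longrightarrow> length (factor W s e) = e - s"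
  by (simp add: factor_def)

lemma factor_append:
  assumes "s \<le> m" "m \<le> e"
  shows "factor W s e = factor W s m @ factor W m e"
proof -
  have "factor W s e = take ((m - s) + (e - m)) (drop s W)"
    using assms by (simp add: factor_def)
  then show ?thesis
    unfolding take_add using assms by (simp add: factor_def)
qed

lemma sublist_factor: "s' \<le> s \<Longrightarrow> s \<le> e \<Longrightarrow> e \<le> e' \<Longrightarrow> sublist (factor W s e) (factor W s' e')"
  by (metis factor_append le_trans sublist_appendI)

lemma factor_Cons: "0 < s \<Longrightarrow> factor (c # S) s e = factor S (s - 1) (e - 1)"
  by (cases s) (auto simp: factor_def)

lemma tl_factor: "tl (factor W s e) = factor W (Suc s) e"
  by (simp add: factor_def tl_take tl_drop drop_Suc)

lemma butlast_factor: "e \<le> length W \<Longrightarrow> butlast (factor W s e) = factor W s (e - 1)"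
  by (simp add: factor_def butlast_take)

lemma finite_mus: "finite (mus W)"
  by (rule finite_subset[of _ "{..length W} \<times> {..length W}"]) (auto simp: mus_def)

lemma mus_not_nested:
  assumes "(s, e) \<in> mus W" "(s', e') \<in> mus W" "s' \<le> s" "e \<le> e'"
  shows "s = s' \<and> e = e'"
proof (rule ccontr)
  assume "\<not> (s = s' \<and> e = e')"
  then have "sublist (factor W s e) (factor W (Suc s') e') \<or> sublist (factor W s e) (factor W s' (e' - 1))"
    using assms by (auto simp: mus_def intro!: sublist_factor)
  then show False
    using assms(1,2) occ_antimono[of "factor W s e" _ W] by (fastforce simp: mus_def)
qed

lemma mus_start_determines_end: "(s, e) \<in> mus W \<Longrightarrow> (s, e') \<in> mus W \<Longrightarrow> e = e'"
  using mus_not_nested[of s e W s e'] mus_not_nested[of s e' W s e] by (cases "e \<le> e'") auto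

lemma card_mus_subset_le_1:
  assumes "X \<subseteq> mus W" and "\<And>x y. x \<in> X \<Longrightarrow> y \<in> X \<Longrightarrow> fst x = fst y"
  shows "card X \<le> 1"
proof -
  have "x = y" if "x \<in> X" "y \<in> X" for x y
    using that assms mus_start_determines_end[of "fst x" "snd x" W "snd y"] by (metis prod.collapse subsetD)
  then show ?thesis
    using finite_subset[OF assms(1) finite_mus] by (simp add: card_le_Suc0_iff_eq)
qed

section \<open>Prepending a letter\<close>

definition unique_prefix :: "'a list \<Rightarrow> 'a list \<Rightarrow> 'a list \<Rightarrow> bool" where
  "unique_prefix S U v \<longleftrightarrow> prefix v U \<and> occ S v = 1"

lemma mem_map_prod_Suc_iff:
  "(s, e) \<in> map_prod Suc Suc ` X \<longleftrightarrow> 0 < s \<and> 0 < e \<and> (s - 1, e - 1) \<in> X"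
  by (cases s; cases e) (auto simp: image_iff intro: bexI[of _ "(_, _)"])

lemma unique_prefix_factors_same_start:
  assumes "unique_prefix S U (factor S p q)" "unique_prefix S U (factor S p' q')"
    and "p \<le> q" "q \<le> length S" "p' \<le> q'" "q' \<le> length S"
  shows "p = p'"
proof -
  let ?v = "factor S p q" and ?v' = "factor S p' q'"
  have "prefix ?v ?v' \<or> prefix ?v' ?v"
    using assms(1,2) prefix_same_cases unfolding unique_prefix_def by blast
  moreover have "occurs_at S ?v p" "occurs_at S ?v' p'"
    using assms(3-6) by (simp_all add: occurs_at_factor)
  ultimately have "occurs_at S ?v p' \<or> occurs_at S ?v' p"
    using occurs_at_infix[of S "[]"] by (auto simp: prefix_def)
  then show ?thesis
    using assms(1,2) \<open>occurs_at S ?v p\<close> \<open>occurs_at S ?v' p'\<close> occ_eq_1D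
    unfolding unique_prefix_def by metis
qed

lemma occ_Cons_ge_2D: "2 \<le> occ (c # S) v \<Longrightarrow> 2 \<le> occ S v \<or> unique_prefix S (c # S) v"
  by (auto simp: unique_prefix_def occ_Cons split: if_splits)

lemma removed_mus_unique_prefix:
  assumes "(s, e) \<in> mus S" "(Suc s, Suc e) \<notin> mus (c # S)"
  shows "unique_prefix S (c # S) (factor S s e)"
proof -
  have "occ (c # S) (factor S s e) \<noteq> 1"
    using assms by (auto simp: mus_def factor_Cons occ_Cons)
  then show ?thesis
    using assms(1) by (auto simp: unique_prefix_def mus_def occ_Cons split: if_splits)
qed

lemma added_mus_cases:
  assumes "(s, e) \<in> mus (c # S)" "(s, e) \<notin> map_prod Suc Suc ` mus S"
  shows "s = 0 \<or> unique_prefix S (c # S) (factor S s (e - 1))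
    \<or> unique_prefix S (c # S) (factor S (s - 1) (e - 2))"
proof (rule ccontr)
  assume not_cases: "\<not> ?thesis"
  then have "0 < s"
    by simp
  then have tl_eq: "factor (c # S) (Suc s) e = factor S s (e - 1)"
    and butlast_eq: "factor (c # S) s (e - 1) = factor S (s - 1) (e - 2)"
    and factor_eq: "factor (c # S) s e = factor S (s - 1) (e - 1)"
    by (simp_all add: factor_Cons numeral_2_eq_2)
  have "s < e" "e \<le> Suc (length S)" and unique: "occ (c # S) (factor (c # S) s e) = 1"
    and tl_repeats: "2 \<le> occ (c # S) (factor (c # S) (Suc s) e)"
    and butlast_repeats: "2 \<le> occ (c # S) (factor (c # S) s (e - 1))"
    using assms(1) by (simp_all add: mus_def)
  have "2 \<le> occ S (factor S s (e - 1))"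
    using occ_Cons_ge_2D[OF tl_repeats[unfolded tl_eq]] not_cases by blast
  moreover have "2 \<le> occ S (factor S (s - 1) (e - 2))"
    using occ_Cons_ge_2D[OF butlast_repeats[unfolded butlast_eq]] not_cases by blast
  moreover have "0 < occ S (factor S (s - 1) (e - 1))"
    using \<open>s < e\<close> \<open>e \<le> Suc (length S)\<close> by (intro occ_pos[OF occurs_at_factor]) auto
  ultimately have "(s - 1, e - 1) \<in> mus S"
    using \<open>0 < s\<close> \<open>s < e\<close> \<open>e \<le> Suc (length S)\<close> unique
    by (auto simp: mus_def occ_Cons factor_eq numeral_2_eq_2 split: if_splits)
  then show False
    using assms(2) \<open>0 < s\<close> \<open>s < e\<close> by (simp add: mem_map_prod_Suc_iff)
qed

lemma mus_shortest_unique_prefix: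
  assumes "S \<noteq> []" and unique: "occ S (take q (c # S)) = 1"
    and shortest: "\<And>q'. q' < q \<Longrightarrow> occ S (take q' (c # S)) \<noteq> 1"
    and at_p: "occurs_at S (take q (c # S)) p"
  shows "(p, p + q) \<in> mus S" and "factor S p (p + q) = take q (c # S)"
proof -
  have "0 < q"
    using assms(1) unique by (cases q) (auto simp: occ_Nil)
  have "p + q \<le> length S" and factor_eq: "factor S p (p + q) = take q (c # S)"
    using at_p by (auto simp: occurs_at_def factor_def min_def split: if_splits)
  have tl_eq: "factor S (Suc p) (p + q) = take (q - 1) S"
    using arg_cong[OF factor_eq, of tl] by (simp add: tl_factor tl_take)
  have butlast_eq: "factor S p (p + q - 1) = take (q - 1) (c # S)"
    using arg_cong[OF factor_eq, of butlast] \<open>p + q \<le> length S\<close> by (simp add: butlast_factor butlast_take)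
  have "2 \<le> occ S (factor S (Suc p) (p + q))"
  proof (rule occ_ge_2I)
    show "occurs_at S (factor S (Suc p) (p + q)) (Suc p)"
      using \<open>0 < q\<close> \<open>p + q \<le> length S\<close> by (intro occurs_at_factor) auto
    show "occurs_at S (factor S (Suc p) (p + q)) 0"
      unfolding tl_eq using \<open>p + q \<le> length S\<close> by (simp add: occurs_at_def)
  qed simp
  moreover have "2 \<le> occ S (factor S p (p + q - 1))"
  proof -
    have "0 < occ S (factor S p (p + q - 1))"
      using \<open>0 < q\<close> \<open>p + q \<le> length S\<close> by (intro occ_pos[OF occurs_at_factor]) auto
    then show ?thesis
      using shortest[of "q - 1"] \<open>0 < q\<close> butlast_eq by fastforce
  qed
  ultimately show "(p, p + q) \<in> mus S"
    using \<open>0 < q\<close> \<open>p + q \<le> length S\<close> unique factor_eq by (simp add: mus_def)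
  show "factor S p (p + q) = take q (c # S)"
    by (fact factor_eq)
qed

lemma removed_mus_exists:
  assumes "S \<noteq> []" "unique_prefix S (c # S) v"
  shows "map_prod Suc Suc ` mus S - mus (c # S) \<noteq> {}"
proof -
  have "\<exists>q. occ S (take q (c # S)) = 1"
    using assms(2) by (metis unique_prefix_def prefix_def append_eq_conv_conj)
  then obtain q where unique: "occ S (take q (c # S)) = 1"
    and shortest: "\<And>q'. q' < q \<Longrightarrow> occ S (take q' (c # S)) \<noteq> 1"
    unfolding exists_least_iff[of "\<lambda>q. occ S (take q (c # S)) = 1"] by blast
  obtain p where at_p: "occurs_at S (take q (c # S)) p"
    using unique by (rule occ_eq_1E)
  note shortest_mus = mus_shortest_unique_prefix[OF assms(1) unique shortest at_p]
  have "occ (c # S) (factor S p (p + q)) = 2"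
    using unique by (simp add: shortest_mus(2) occ_Cons take_is_prefix)
  then have "(Suc p, Suc (p + q)) \<notin> mus (c # S)"
    by (simp add: mus_def factor_Cons)
  with shortest_mus(1) show ?thesis
    by (auto simp: mem_map_prod_Suc_iff)
qed

lemma card_removed_mus_le_1: "card (map_prod Suc Suc ` mus S - mus (c # S)) \<le> 1"
proof -
  define R where "R = {x \<in> mus S. map_prod Suc Suc x \<notin> mus (c # S)}"
  have "card R \<le> 1"
  proof (rule card_mus_subset_le_1[of _ S])
    fix x y assume "x \<in> R" "y \<in> R"
    then obtain s e s' e' where "x = (s, e)" "y = (s', e')"
      and x_mus: "(s, e) \<in> mus S" "(Suc s, Suc e) \<notin> mus (c # S)"
      and y_mus: "(s', e') \<in> mus S" "(Suc s', Suc e') \<notin> mus (c # S)"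
      unfolding R_def by (metis (no_types, lifting) mem_Collect_eq map_prod_simp prod.collapse)
    moreover have "s = s'"
    proof (rule unique_prefix_factors_same_start)
      show "unique_prefix S (c # S) (factor S s e)" "unique_prefix S (c # S) (factor S s' e')"
        using x_mus y_mus by (simp_all add: removed_mus_unique_prefix)
    qed (use x_mus(1) y_mus(1) in \<open>simp_all add: mus_def\<close>)
    ultimately show "fst x = fst y"
      by simp
  qed (auto simp: R_def)
  moreover have "map_prod Suc Suc ` mus S - mus (c # S) = map_prod Suc Suc ` R"
    by (auto simp: R_def)
  moreover have "finite R"
    by (simp add: R_def finite_mus)
  ultimately show ?thesis
    using card_image_le[of R "map_prod Suc Suc"] by simp
qed

text \<open>k = 0 and k = 1 cover the second and third case of added_mus_cases.\<close>
lemma card_mus_unique_prefix_le_1: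
  "card {(s, e) \<in> mus (c # S). k \<le> s \<and> unique_prefix S (c # S) (factor S (s - k) (e - Suc k))} \<le> 1"
    (is "card ?X \<le> 1")
proof (rule card_mus_subset_le_1[of _ "c # S"])
  fix x y assume "x \<in> ?X" "y \<in> ?X"
  then obtain s e s' e' where "x = (s, e)" "y = (s', e')"
    and x_mus: "(s, e) \<in> mus (c # S)" "k \<le> s" "unique_prefix S (c # S) (factor S (s - k) (e - Suc k))"
    and y_mus: "(s', e') \<in> mus (c # S)" "k \<le> s'" "unique_prefix S (c # S) (factor S (s' - k) (e' - Suc k))"
    by blast
  moreover have "s - k = s' - k"
    by (rule unique_prefix_factors_same_start[OF x_mus(3) y_mus(3)])
      (use x_mus(1) y_mus(1) in \<open>auto simp: mus_def\<close>)
  ultimately show "fst x = fst y"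
    by simp
qed auto

lemma card_mus_start_0_le_1: "card {x \<in> mus W. fst x = 0} \<le> 1"
  by (rule card_mus_subset_le_1) auto

lemma card_added_mus_le_3: "card (mus (c # S) - map_prod Suc Suc ` mus S) \<le> 3"
proof -
  let ?X = "\<lambda>k. {(s, e) \<in> mus (c # S). k \<le> s \<and> unique_prefix S (c # S) (factor S (s - k) (e - Suc k))}"
  let ?Start0 = "{x \<in> mus (c # S). fst x = 0}"
  have "mus (c # S) - map_prod Suc Suc ` mus S \<subseteq> ?Start0 \<union> ?X 0 \<union> ?X 1"
  proof
    fix x assume "x \<in> mus (c # S) - map_prod Suc Suc ` mus S"
    moreover obtain s e where "x = (s, e)"
      by fastforce
    ultimately show "x \<in> ?Start0 \<union> ?X 0 \<union> ?X 1"
      using added_mus_cases[of s e c S] by (auto simp: numeral_2_eq_2)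
  qed
  moreover have "finite (?Start0 \<union> ?X 0 \<union> ?X 1)"
    using finite_mus by (auto intro: finite_subset)
  ultimately have "card (mus (c # S) - map_prod Suc Suc ` mus S) \<le> card (?Start0 \<union> ?X 0 \<union> ?X 1)"
    by (rule card_mono[rotated])
  also have "\<dots> \<le> card ?Start0 + card (?X 0) + card (?X 1)"
    using card_Un_le[of "?Start0 \<union> ?X 0" "?X 1"] card_Un_le[of ?Start0 "?X 0"] by linarith
  also have "\<dots> \<le> 3"
    using card_mus_start_0_le_1[of "c # S"] card_mus_unique_prefix_le_1[of c S 0]
      card_mus_unique_prefix_le_1[of c S 1]
    by linarith
  finally show ?thesis .
qed

lemma card_added_mus_le_1:
  assumes "S \<noteq> []" "map_prod Suc Suc ` mus S \<subseteq> mus (c # S)"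
  shows "card (mus (c # S) - map_prod Suc Suc ` mus S) \<le> 1"
proof -
  have "mus (c # S) - map_prod Suc Suc ` mus S \<subseteq> {x \<in> mus (c # S). fst x = 0}"
  proof
    fix x assume "x \<in> mus (c # S) - map_prod Suc Suc ` mus S"
    moreover obtain s e where "x = (s, e)"
      by fastforce
    ultimately show "x \<in> {x \<in> mus (c # S). fst x = 0}"
      using added_mus_cases[of s e c S] removed_mus_exists[OF assms(1)] assms(2) by auto
  qed
  then have "card (mus (c # S) - map_prod Suc Suc ` mus S) \<le> card {x \<in> mus (c # S). fst x = 0}"
    by (rule card_mono[rotated]) (auto intro: finite_subset[OF _ finite_mus])
  then show ?thesis
    using card_mus_start_0_le_1 by (rule order_trans)
qed

section \<open>Minimal unique substrings of T\<close>

lemma length_substr: "1 \<le> a \<Longrightarrow> b \<le> length T \<Longrightarrow> length (substr T a b) = Suc b - a"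
  by (simp add: substr_def)

lemma substr_eq_factor:
  assumes "1 \<le> a" "a \<le> s" "s \<le> t" "t \<le> b"
  shows "substr T s t = factor (substr T a b) (s - a) (Suc t - a)"
proof -
  have "factor (substr T a b) (s - a) (Suc t - a)
      = take (Suc t - s) (drop (s - a) (take (Suc b - a) (drop (a - 1) T)))"
    using assms by (simp add: factor_def substr_def)
  also have "\<dots> = take (Suc t - s) (take (Suc b - s) (drop (s - 1) T))"
    using assms by (simp add: drop_take)
  also have "\<dots> = substr T s t"
    using assms by (simp add: substr_def min_def)
  finally show ?thesis ..
qed

lemma substr_pred_eq_Cons:
  assumes "1 < i" "i \<le> j" "j \<le> length T"
  shows "substr T (i - 1) j = T ! (i - 2) # substr T i j"
proof -
  have "drop (i - 2) T = T ! (i - 2) # drop (i - 1) T"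
    using assms Cons_nth_drop_Suc[of "i - 2" T] by (simp add: Suc_diff_Suc numeral_2_eq_2)
  moreover have "Suc j - (i - 1) = Suc (Suc j - i)"
    using assms by simp
  ultimately show ?thesis
    using assms by (simp add: substr_def numeral_2_eq_2)
qed

lemma mem_MUS_iff_mus:
  assumes "1 \<le> a" "a \<le> s" "s \<le> t" "t \<le> b" "b \<le> length T"
  shows "(s, t) \<in> MUS T a b \<longleftrightarrow> (s - a, Suc t - a) \<in> mus (substr T a b)"
proof -
  let ?W = "substr T a b"
  let ?w = "factor ?W (s - a) (Suc t - a)"
  have "length ?W = Suc b - a"
    using assms by (simp add: length_substr)
  then have "length ?w = Suc t - s"
    using assms by (simp add: length_factor)
  then have "?w \<noteq> []"
    using assms by auto
  have "(s, t) \<in> MUS T a b \<longleftrightarrow> occ ?W ?w = 1 \<and> 2 \<le> occ ?W (tl ?w) \<and> 2 \<le> occ ?W (butlast ?w)"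
    using assms all_strict_sublists_repeating_iff[OF \<open>?w \<noteq> []\<close>]
    by (simp add: MUS_def substr_eq_factor[of a s t b])
  also have "\<dots> \<longleftrightarrow> (s - a, Suc t - a) \<in> mus ?W"
    using assms \<open>length ?W = Suc b - a\<close>
    by (simp add: mus_def tl_factor butlast_factor Suc_diff_le diff_le_mono less_Suc_eq_le)
  finally show ?thesis .
qed

lemma MUS_eq_image_mus:
  assumes "1 \<le> a" "a \<le> b" "b \<le> length T"
  shows "MUS T a b = map_prod (\<lambda>s. s + a) (\<lambda>e. e + a - 1) ` mus (substr T a b)"
proof (intro set_eqI iffI)
  fix x assume "x \<in> MUS T a b"
  moreover obtain s t where "x = (s, t)"
    by fastforce
  ultimately have "a \<le> s" "s \<le> t" "t \<le> b" "(s - a, Suc t - a) \<in> mus (substr T a b)"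
    using assms mem_MUS_iff_mus[of a s t b T] by (auto simp: MUS_def)
  then show "x \<in> map_prod (\<lambda>s. s + a) (\<lambda>e. e + a - 1) ` mus (substr T a b)"
    using \<open>x = (s, t)\<close> by (force intro: rev_image_eqI)
next
  fix x assume "x \<in> map_prod (\<lambda>s. s + a) (\<lambda>e. e + a - 1) ` mus (substr T a b)"
  then obtain s e where "(s, e) \<in> mus (substr T a b)" and x: "x = (s + a, e + a - 1)"
    by auto
  moreover have "s < e" "e \<le> Suc b - a"
    using calculation(1) assms by (auto simp: mus_def length_substr)
  ultimately show "x \<in> MUS T a b"
    using assms mem_MUS_iff_mus[of a "s + a" "e + a - 1" b T] by simp
qed

lemma card_symdiff_image:
  assumes "inj h" "finite A" "finite B"
  shows "card (symdiff (h ` A) (h ` B)) = card (A - B) + card (B - A)"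
proof -
  have "symdiff (h ` A) (h ` B) = h ` (A - B) \<union> h ` (B - A)"
    using assms(1) by (simp add: symdiff_def image_set_diff)
  moreover have "h ` (A - B) \<inter> h ` (B - A) = {}"
    using assms(1) by (auto simp: inj_eq)
  ultimately show ?thesis
    using assms by (simp add: card_Un_disjoint card_image inj_on_subset)
qed

lemma card_image_diff_int:
  assumes "inj h" "finite A" "finite B"
  shows "int (card (h ` A)) - int (card (h ` B)) = int (card (A - B)) - int (card (B - A))"
  using assms card_Int_Diff[of A B] card_Int_Diff[of B A]
  by (simp add: card_image inj_on_subset Int_commute)

lemma MUS_change:
  assumes "1 < i" "i \<le> j" "j \<le> length T"
  defines "U \<equiv> substr T (i - 1) j" and "S \<equiv> substr T i j"
  shows "card (symdiff (MUS T (i - 1) j) (MUS T i j))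
      = card (mus U - map_prod Suc Suc ` mus S) + card (map_prod Suc Suc ` mus S - mus U)"
    and "int (card (MUS T (i - 1) j)) - int (card (MUS T i j))
      = int (card (mus U - map_prod Suc Suc ` mus S)) - int (card (map_prod Suc Suc ` mus S - mus U))"
proof -
  define h where "h = map_prod (\<lambda>s. s + (i - 1)) (\<lambda>e. e + (i - 1) - 1)"
  have "map_prod (\<lambda>s. s + i) (\<lambda>e. e + i - 1) = h \<circ> map_prod Suc Suc"
    using assms(1) by (auto simp: h_def fun_eq_iff)
  then have "MUS T i j = h ` map_prod Suc Suc ` mus S"
    using assms by (simp add: MUS_eq_image_mus image_comp)
  moreover have "MUS T (i - 1) j = h ` mus U"
    using assms by (simp add: MUS_eq_image_mus h_def)
  moreover have "inj h"
    using assms(1) by (auto simp: h_def inj_def)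
  moreover have "finite (mus U)" "finite (map_prod Suc Suc ` mus S)"
    by (simp_all add: finite_mus)
  ultimately show "card (symdiff (MUS T (i - 1) j) (MUS T i j))
      = card (mus U - map_prod Suc Suc ` mus S) + card (map_prod Suc Suc ` mus S - mus U)"
    and "int (card (MUS T (i - 1) j)) - int (card (MUS T i j))
      = int (card (mus U - map_prod Suc Suc ` mus S)) - int (card (map_prod Suc Suc ` mus S - mus U))"
    by (simp_all add: card_symdiff_image card_image_diff_int)
qed

lemma MUS_change_bounds:
  assumes "1 < i" "i \<le> j" "j \<le> length T"
  shows "card (symdiff (MUS T (i - 1) j) (MUS T i j)) \<le> 4"
    and "-1 \<le> int (card (MUS T (i - 1) j)) - int (card (MUS T i j))"
    and "int (card (MUS T (i - 1) j)) - int (card (MUS T i j)) \<le> 2"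
proof -
  define c S where "c = T ! (i - 2)" and "S = substr T i j"
  have U: "substr T (i - 1) j = c # S"
    using substr_pred_eq_Cons[OF assms] by (simp add: c_def S_def)
  have "S \<noteq> []"
    using assms length_substr[of i j T] by (auto simp: S_def)
  let ?added = "mus (c # S) - map_prod Suc Suc ` mus S"
  let ?removed = "map_prod Suc Suc ` mus S - mus (c # S)"
  have "card ?removed \<le> 1" "card ?added \<le> 3"
    by (rule card_removed_mus_le_1, rule card_added_mus_le_3)
  moreover have "card ?removed = 0 \<Longrightarrow> card ?added \<le> 1"
    using card_added_mus_le_1[OF \<open>S \<noteq> []\<close>] by (simp add: finite_mus)
  ultimately show "card (symdiff (MUS T (i - 1) j) (MUS T i j)) \<le> 4"
    and "-1 \<le> int (card (MUS T (i - 1) j)) - int (card (MUS T i j))"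
    and "int (card (MUS T (i - 1) j)) - int (card (MUS T i j)) \<le> 2"
    using MUS_change[OF assms] unfolding U S_def[symmetric] by linarith+
qed

section \<open>Tightness\<close>

lemma occurs_at_singleton: "occurs_at W [x] p \<longleftrightarrow> p < length W \<and> W ! p = x"
  by (auto simp: occurs_at_def take_Suc_conv_app_nth)

lemma occurs_at_pair: "occurs_at W [x, y] p \<longleftrightarrow> Suc p < length W \<and> W ! p = x \<and> W ! Suc p = y"
  by (auto simp: occurs_at_def take_Suc_conv_app_nth numeral_2_eq_2)

lemma factor_eq_map_nth: "e \<le> length W \<Longrightarrow> factor W s e = map (\<lambda>k. W ! (s + k)) [0..<e - s]"
  by (simp add: factor_def list_eq_iff_nth_eq)

text \<open>Prepending a to c^m a b b creates the MUSs ac, ca and ab and destroys the MUS a.\<close>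
lemma nth_example_symdiff_4:
  "k < m + 3 \<Longrightarrow> (replicate m c @ [a, b, b]) ! k = (if k < m then c else if k = m then a else b)"
  "k < m + 4 \<Longrightarrow> (a # replicate m c @ [a, b, b]) ! k
    = (if k = 0 then a else if k \<le> m then c else if k = m + 1 then a else b)"
  by (cases k; auto simp: nth_append nth_Cons' split: nat.splits)+

lemma occ_example_symdiff_4:
  assumes "2 \<le> m" "a \<noteq> b" "a \<noteq> c" "b \<noteq> c"
  defines "S \<equiv> replicate m c @ [a, b, b]"
  shows "2 \<le> occ (a # S) [a]" "2 \<le> occ (a # S) [c]" "2 \<le> occ (a # S) [b]"
    and "occ S [a] = 1" "occ (a # S) [a, c] = 1" "occ (a # S) [c, a] = 1" "occ (a # S) [a, b] = 1"
proof -
  have len: "length (a # S) = m + 4" "length S = m + 3"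
    by (simp_all add: S_def)
  note nth_S = nth_example_symdiff_4(1)[where a = a and b = b and c = c and m = m, folded S_def]
  note nth_U = nth_example_symdiff_4(2)[where a = a and b = b and c = c and m = m, folded S_def]
  show "2 \<le> occ (a # S) [a]" "2 \<le> occ (a # S) [c]" "2 \<le> occ (a # S) [b]"
    by (rule occ_ge_2I[of _ _ 0 "m + 1"] occ_ge_2I[of _ _ 1 2] occ_ge_2I[of _ _ "m + 2" "m + 3"];
        use assms(1) in \<open>auto simp: occurs_at_singleton nth_S nth_U len\<close>)+
  show "occ S [a] = 1" "occ (a # S) [a, c] = 1" "occ (a # S) [c, a] = 1" "occ (a # S) [a, b] = 1"
    by (rule occ_eq_1I[of _ _ m] occ_eq_1I[of _ _ 0] occ_eq_1I[of _ _ m] occ_eq_1I[of _ _ "m + 1"];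
        use assms(1-4) in \<open>auto simp: occurs_at_singleton occurs_at_pair nth_S nth_U len split: if_splits\<close>)+
qed

lemma mus_change_example_symdiff_4:
  assumes "2 \<le> m" "a \<noteq> b" "a \<noteq> c" "b \<noteq> c"
  defines "S \<equiv> replicate m c @ [a, b, b]"
  shows "card (mus (a # S) - map_prod Suc Suc ` mus S) = 3"
    and "card (map_prod Suc Suc ` mus S - mus (a # S)) = 1"
proof -
  define U where "U = a # S"
  have len: "length U = m + 4" "length S = m + 3"
    by (simp_all add: U_def S_def)
  note nth_S = nth_example_symdiff_4(1)[where a = a and b = b and c = c and m = m, folded S_def]
  note nth_U = nth_example_symdiff_4(2)[where a = a and b = b and c = c and m = m, folded S_def U_def]
  note occs = occ_example_symdiff_4[OF assms(1-4), folded S_def U_def]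
  have factors_U: "factor U 0 2 = [a, c]" "factor U 1 2 = [c]" "factor U 0 1 = [a]"
    "factor U m (m + 2) = [c, a]" "factor U (m + 1) (m + 2) = [a]" "factor U m (m + 1) = [c]"
    "factor U (m + 1) (m + 3) = [a, b]" "factor U (m + 2) (m + 3) = [b]"
    using assms(1) by (simp_all add: factor_eq_map_nth len nth_U upt_rec)
  have factors_S: "factor S m (m + 1) = [a]" "factor S (m + 1) (m + 1) = []" "factor S m m = []"
    using assms(1) by (simp_all add: factor_eq_map_nth len nth_S)
  have "(0, 2) \<in> mus U" "(m, m + 2) \<in> mus U" "(m + 1, m + 3) \<in> mus U"
    using occs factors_U by (simp_all add: mus_def len numeral_2_eq_2 numeral_3_eq_3)
  moreover have "(m - 1, m + 1) \<notin> mus S" "(m, m + 2) \<notin> mus S"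
    using assms(1) occs factors_S by (simp_all add: mus_def)
  ultimately have "{(0, 2), (m, m + 2), (m + 1, m + 3)} \<subseteq> mus U - map_prod Suc Suc ` mus S"
    using assms(1) by (auto simp: mem_map_prod_Suc_iff)
  from card_mono[OF _ this] have "3 \<le> card (mus U - map_prod Suc Suc ` mus S)"
    using assms(1) by (simp add: finite_mus)
  then show "card (mus (a # S) - map_prod Suc Suc ` mus S) = 3"
    using card_added_mus_le_3[of a S] by (simp add: U_def)
  have "(m, m + 1) \<in> mus S"
    using occs factors_S len by (simp add: mus_def occ_Nil)
  moreover have "(m + 1, m + 2) \<notin> mus U"
    using occs factors_U by (simp add: mus_def)
  ultimately have "map_prod Suc Suc ` mus S - mus U \<noteq> {}"
    by (auto simp: mem_map_prod_Suc_iff)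
  then have "0 < card (map_prod Suc Suc ` mus S - mus U)"
    by (simp add: card_gt_0_iff finite_mus)
  then show "card (map_prod Suc Suc ` mus S - mus (a # S)) = 1"
    using card_removed_mus_le_1[of S a] by (simp add: U_def)
qed

text \<open>Prepending b to b a^m b b destroys the MUS bb and creates nothing.\<close>
lemma nth_example_diff_minus_1:
  "k < m + 3 \<Longrightarrow> (b # replicate m a @ [b, b]) ! k = (if k = 0 then b else if k \<le> m then a else b)"
  "k < m + 4 \<Longrightarrow> (b # b # replicate m a @ [b, b]) ! k = (if k \<le> 1 then b else if k \<le> m + 1 then a else b)"
  by (cases k; auto simp: nth_append nth_Cons' split: nat.splits)+

lemma occ_example_diff_minus_1:
  assumes "2 \<le> m" "a \<noteq> b"
  defines "S \<equiv> b # replicate m a @ [b, b]"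
  shows "2 \<le> occ S [b]" "2 \<le> occ (b # S) [b]" "2 \<le> occ (b # S) [b, b]"
    and "occ S [b, b] = 1" "occ (b # S) [b, a] = 1" "occ (b # S) [a, b] = 1"
proof -
  have len: "length (b # S) = m + 4" "length S = m + 3"
    by (simp_all add: S_def)
  note nth_S = nth_example_diff_minus_1(1)[where a = a and b = b and m = m, folded S_def]
  note nth_U = nth_example_diff_minus_1(2)[where a = a and b = b and m = m, folded S_def]
  show "2 \<le> occ S [b]" "2 \<le> occ (b # S) [b]" "2 \<le> occ (b # S) [b, b]"
    by (rule occ_ge_2I[of _ _ 0 "m + 1"] occ_ge_2I[of _ _ 0 1] occ_ge_2I[of _ _ 0 "m + 2"];
        use assms(1) in \<open>auto simp: occurs_at_singleton occurs_at_pair nth_S nth_U len\<close>)+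
  show "occ S [b, b] = 1" "occ (b # S) [b, a] = 1" "occ (b # S) [a, b] = 1"
    by (rule occ_eq_1I[of _ _ "m + 1"] occ_eq_1I[of _ _ 1];
        use assms(1,2) in \<open>auto simp: occurs_at_pair nth_S nth_U len split: if_splits\<close>)+
qed

lemma occurs_at_bb_example_diff_minus_1:
  assumes "2 \<le> m" "a \<noteq> b"
  defines "S \<equiv> b # replicate m a @ [b, b]"
  assumes "occurs_at S [b, b] q"
  shows "q = m + 1"
proof -
  note nth_S = nth_example_diff_minus_1(1)[where a = a and b = b and m = m, folded S_def]
  have "length S = m + 3"
    by (simp add: S_def)
  then have "Suc q < m + 3" "S ! q = b" "S ! Suc q = b"
    using assms(4) by (simp_all add: occurs_at_pair)
  then show ?thesis
    using nth_S[of q] nth_S[of "Suc q"] assms(1,2) by (auto split: if_splits)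
qed

lemma factor_eq_bb_example_diff_minus_1:
  assumes "2 \<le> m" "a \<noteq> b"
  defines "S \<equiv> b # replicate m a @ [b, b]"
  assumes "factor S p q = [b, b]" "p \<le> q" "q \<le> m + 3"
  shows "p = m + 1" "q = m + 3"
proof -
  have "occurs_at S [b, b] p"
    using assms(4-6) occurs_at_factor[of p q S] by (simp add: S_def)
  then show "p = m + 1"
    using assms(1,2) unfolding S_def by (intro occurs_at_bb_example_diff_minus_1)
  moreover have "length (factor S p q) = q - p"
    using assms(6) by (simp add: S_def length_factor)
  ultimately show "q = m + 3"
    using assms(4) by simp
qed

lemma unique_prefix_example_diff_minus_1:
  assumes "2 \<le> m" "a \<noteq> b"
  defines "S \<equiv> b # replicate m a @ [b, b]"
  assumes "unique_prefix S (b # S) v"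
  shows "v = [b, b]"
proof -
  have len: "length S = m + 3"
    by (simp add: S_def)
  obtain p where at_p: "occurs_at S v p"
    using assms(4) occ_eq_1E unfolding unique_prefix_def by blast
  have v: "v = take (length v) (b # S)"
    using assms(4) by (auto simp: unique_prefix_def prefix_def)
  consider "length v = 0" | "length v = 1" | "2 \<le> length v"
    by linarith
  then show ?thesis
  proof cases
    case 1
    then show ?thesis
      using assms(4) by (simp add: unique_prefix_def occ_Nil len)
  next
    case 2
    then have "v = [b]"
      using v by (simp add: S_def)
    then show ?thesis
      using assms(4) occ_example_diff_minus_1(1)[OF assms(1,2)] by (simp add: unique_prefix_def S_def)
  next
    case 3
    then have "take 2 v = take 2 (b # S)"
      using v by (metis min.absorb1 take_take)
    then have "take 2 v = [b, b]"
      by (simp add: S_def numeral_2_eq_2)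
    then have "v = [] @ [b, b] @ drop 2 v"
      by (metis append_Nil append_take_drop_id)
    then have "occurs_at S [b, b] p"
      using occurs_at_infix[of S "[]" "[b, b]" "drop 2 v" p] at_p by simp
    then have "p = m + 1"
      using assms(1,2) unfolding S_def by (intro occurs_at_bb_example_diff_minus_1)
    then have "length v \<le> 2"
      using at_p by (simp add: occurs_at_def len)
    with \<open>take 2 v = [b, b]\<close> show ?thesis
      by simp
  qed
qed

lemma removed_mus_example_diff_minus_1:
  assumes "2 \<le> m" "a \<noteq> b"
  defines "S \<equiv> b # replicate m a @ [b, b]"
  shows "card (map_prod Suc Suc ` mus S - mus (b # S)) = 1"
proof -
  define U where "U = b # S"
  note nth_S = nth_example_diff_minus_1(1)[where a = a and b = b and m = m, folded S_def]
  note nth_U = nth_example_diff_minus_1(2)[where a = a and b = b and m = m, folded S_def U_def]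
  note occs = occ_example_diff_minus_1[OF assms(1,2), folded S_def U_def]
  have len: "length U = m + 4" "length S = m + 3"
    by (simp_all add: U_def S_def)
  have "(m + 1, m + 3) \<in> mus S"
    using occs assms(1) by (simp add: mus_def len factor_eq_map_nth nth_S upt_rec)
  then have "(Suc (m + 1), Suc (m + 3)) \<in> map_prod Suc Suc ` mus S"
    by (rule rev_image_eqI) simp
  moreover have "(Suc (m + 1), Suc (m + 3)) \<notin> mus U"
    using occs assms(1) by (simp add: mus_def len factor_eq_map_nth nth_U upt_rec)
  ultimately have "map_prod Suc Suc ` mus S - mus U \<noteq> {}"
    by blast
  then have "0 < card (map_prod Suc Suc ` mus S - mus U)"
    by (simp add: card_gt_0_iff finite_mus)
  then show ?thesis
    using card_removed_mus_le_1[of S b] by (simp add: U_def)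
qed

lemma mus_start_0_example_diff_minus_1:
  assumes "2 \<le> m" "a \<noteq> b"
  defines "S \<equiv> b # replicate m a @ [b, b]"
  shows "(0, e) \<notin> mus (b # S)"
proof
  define U where "U = b # S"
  assume "(0, e) \<in> mus (b # S)"
  then have "0 < e" "e \<le> m + 4" and unique: "occ U (factor U 0 e) = 1"
    and tl_repeats: "2 \<le> occ U (factor U 1 e)"
    by (simp_all add: mus_def U_def S_def)
  note nth_U = nth_example_diff_minus_1(2)[where a = a and b = b and m = m, folded S_def U_def]
  note occs = occ_example_diff_minus_1[OF assms(1,2), folded S_def U_def]
  have len: "length U = m + 4"
    by (simp add: U_def S_def)
  show False
  proof (cases "e \<le> 2")
    case True
    then have "factor U 0 e = [b] \<or> factor U 0 e = [b, b]"
      using \<open>0 < e\<close> assms(1) by (auto simp: factor_eq_map_nth len nth_U le_Suc_eq numeral_2_eq_2)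
    then show False
      using occs unique by auto
  next
    case False
    have "factor U 1 3 = [b, a]"
      using assms(1) by (simp add: factor_eq_map_nth len nth_U upt_rec)
    moreover have "sublist (factor U 1 3) (factor U 1 e)"
      using False by (intro sublist_factor) auto
    ultimately show False
      using occ_antimono[of "[b, a]" "factor U 1 e" U] occs(5) tl_repeats by simp
  qed
qed

lemma added_mus_example_diff_minus_1:
  assumes "2 \<le> m" "a \<noteq> b"
  defines "S \<equiv> b # replicate m a @ [b, b]"
  shows "mus (b # S) - map_prod Suc Suc ` mus S = {}"
proof -
  define U where "U = b # S"
  note nth_U = nth_example_diff_minus_1(2)[where a = a and b = b and m = m, folded S_def U_def]
  note occs = occ_example_diff_minus_1[OF assms(1,2), folded S_def U_def]
  note bb_in_S = factor_eq_bb_example_diff_minus_1[OF assms(1,2), folded S_def]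
  have "(s, e) \<notin> mus U - map_prod Suc Suc ` mus S" for s e
  proof
    assume added: "(s, e) \<in> mus U - map_prod Suc Suc ` mus S"
    then have "s < e" "e \<le> m + 4" and butlast_repeats: "2 \<le> occ U (factor U s (e - 1))"
      by (auto simp: mus_def U_def S_def)
    then have "s \<le> e - 1" "e - 1 \<le> m + 3" "s - 1 \<le> e - 2" "e - 2 \<le> m + 3"
      by auto
    consider "s = 0" | "unique_prefix S U (factor S s (e - 1))"
      | "unique_prefix S U (factor S (s - 1) (e - 2))"
      using added added_mus_cases[of s e b S] by (auto simp: U_def)
    then show False
    proof cases
      case 1
      then show False
        using added mus_start_0_example_diff_minus_1[OF assms(1,2), folded S_def U_def] by auto
    next
      case 2
      with assms(1,2) have "factor S s (e - 1) = [b, b]"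
        unfolding S_def U_def by (rule unique_prefix_example_diff_minus_1)
      then have "s = m + 1" "e = m + 4"
        using bb_in_S[of s "e - 1"] \<open>s \<le> e - 1\<close> \<open>e - 1 \<le> m + 3\<close> \<open>s < e\<close> by auto
      moreover have "length U = m + 4"
        by (simp add: U_def S_def)
      ultimately have "factor U s (e - 1) = [a, b]"
        using assms(1) by (simp add: factor_eq_map_nth nth_U upt_rec)
      then show False
        using butlast_repeats occs(6) by simp
    next
      case 3
      with assms(1,2) have "factor S (s - 1) (e - 2) = [b, b]"
        unfolding S_def U_def by (rule unique_prefix_example_diff_minus_1)
      then show False
        using bb_in_S[of "s - 1" "e - 2"] \<open>s - 1 \<le> e - 2\<close> \<open>e - 2 \<le> m + 3\<close> \<open>s < e\<close> \<open>e \<le> m + 4\<close>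
        by auto
    qed
  qed
  then show ?thesis
    by (auto simp: U_def)
qed

lemma MUS_change_padded:
  assumes "1 < i" "i \<le> j" "j \<le> n" "length S = j - i + 1"
    and "card (mus (c # S) - map_prod Suc Suc ` mus S) = added"
    and "card (map_prod Suc Suc ` mus S - mus (c # S)) = removed"
  obtains T where "length T = n" "set T \<subseteq> insert c (set S)"
    and "card (symdiff (MUS T (i - 1) j) (MUS T i j)) = added + removed"
    and "int (card (MUS T (i - 1) j)) - int (card (MUS T i j)) = int added - int removed"
proof -
  define T where "T = replicate (i - 2) c @ (c # S) @ replicate (n - j) c"
  have "length T = n" "j \<le> length T"
    using assms by (simp_all add: T_def)
  moreover have "Suc j - (i - 1) = length (c # S)" "i - 1 - 1 = i - 2"
    using assms by auto
  then have U: "substr T (i - 1) j = c # S"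
    by (simp add: T_def substr_def)
  moreover have "substr T i j = S"
    using U substr_pred_eq_Cons[OF assms(1,2) \<open>j \<le> length T\<close>] by simp
  moreover have "set T \<subseteq> insert c (set S)"
    by (auto simp: T_def)
  ultimately show ?thesis
    using that MUS_change[OF assms(1,2) \<open>j \<le> length T\<close>] assms(5,6) by simp
qed

lemma MUS_change_tight_symdiff_4:
  assumes "1 < i" "i \<le> j" "j \<le> n" "5 \<le> j - i + 1" "a \<noteq> b" "a \<noteq> c" "b \<noteq> c"
  obtains T where "length T = n" "set T \<subseteq> {a, b, c}"
    and "card (symdiff (MUS T (i - 1) j) (MUS T i j)) = 4"
    and "int (card (MUS T (i - 1) j)) - int (card (MUS T i j)) = 2"
proof -
  define m where "m = j - i - 2"
  have "2 \<le> m" and len: "length (replicate m c @ [a, b, b]) = j - i + 1"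
    using assms by (auto simp: m_def)
  note example = mus_change_example_symdiff_4[OF \<open>2 \<le> m\<close> assms(5-7)]
  obtain T where "length T = n" "set T \<subseteq> insert a (set (replicate m c @ [a, b, b]))"
    and "card (symdiff (MUS T (i - 1) j) (MUS T i j)) = 3 + 1"
    and "int (card (MUS T (i - 1) j)) - int (card (MUS T i j)) = int 3 - int 1"
    by (rule MUS_change_padded[OF assms(1-3) len example])
  then show ?thesis
    by (intro that[of T]) auto
qed

lemma MUS_change_tight_diff_minus_1:
  assumes "1 < i" "i \<le> j" "j \<le> n" "5 \<le> j - i + 1" "a \<noteq> b"
  obtains T where "length T = n" "set T \<subseteq> {a, b}"
    and "int (card (MUS T (i - 1) j)) - int (card (MUS T i j)) = -1"
proof -
  define m where "m = j - i - 2"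
  have "2 \<le> m" and len: "length (b # replicate m a @ [b, b]) = j - i + 1"
    using assms by (auto simp: m_def)
  have example: "card (mus (b # b # replicate m a @ [b, b]) - map_prod Suc Suc ` mus (b # replicate m a @ [b, b])) = 0"
    unfolding added_mus_example_diff_minus_1[OF \<open>2 \<le> m\<close> assms(5)] by simp
  obtain T where "length T = n" "set T \<subseteq> insert b (set (b # replicate m a @ [b, b]))"
    and "int (card (MUS T (i - 1) j)) - int (card (MUS T i j)) = int 0 - int 1"
    by (rule MUS_change_padded[OF assms(1-3) len example
          removed_mus_example_diff_minus_1[OF \<open>2 \<le> m\<close> assms(5)]])
  then show ?thesis
    by (intro that[of T]) auto
qed

theorem theorem2:
  shows "(\<forall>(\<Sigma>::'a set) (T::'a list) i j.
            finite \<Sigma> \<and> card \<Sigma> \<ge> 2 \<and> set T \<subseteq> \<Sigma> \<and> 1 < i \<and> i \<le> j \<and> j \<le> length T \<longrightarrow>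
              card (symdiff (MUS T (i - 1) j) (MUS T i j)) \<le> 4
            \<and> -1 \<le> int (card (MUS T (i - 1) j)) - int (card (MUS T i j))
            \<and> int (card (MUS T (i - 1) j)) - int (card (MUS T i j)) \<le> 2)
       \<and> (\<forall>(\<Sigma>::'a set) (n::nat) i j.
            finite \<Sigma> \<and> card \<Sigma> \<ge> 3 \<and> 1 < i \<and> i \<le> j \<and> j \<le> n \<and> j - i + 1 \<ge> 5 \<longrightarrow>
              (\<exists>T. length T = n \<and> set T \<subseteq> \<Sigma> \<and>
                   card (symdiff (MUS T (i - 1) j) (MUS T i j)) = 4)
            \<and> (\<exists>T. length T = n \<and> set T \<subseteq> \<Sigma> \<and>
                   int (card (MUS T (i - 1) j)) - int (card (MUS T i j)) = 2)
            \<and> (\<exists>T. length T = n \<and> set T \<subseteq> \<Sigma> \<and>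
                   int (card (MUS T (i - 1) j)) - int (card (MUS T i j)) = -1))"
proof (intro conjI allI impI)
  fix \<Sigma> :: "'a set" and T :: "'a list" and i j :: nat
  assume "finite \<Sigma> \<and> card \<Sigma> \<ge> 2 \<and> set T \<subseteq> \<Sigma> \<and> 1 < i \<and> i \<le> j \<and> j \<le> length T"
  then show "card (symdiff (MUS T (i - 1) j) (MUS T i j)) \<le> 4"
    and "-1 \<le> int (card (MUS T (i - 1) j)) - int (card (MUS T i j))"
    and "int (card (MUS T (i - 1) j)) - int (card (MUS T i j)) \<le> 2"
    using MUS_change_bounds[of i j T] by auto
next
  fix \<Sigma> :: "'a set" and n i j :: nat
  assume H: "finite \<Sigma> \<and> card \<Sigma> \<ge> 3 \<and> 1 < i \<and> i \<le> j \<and> j \<le> n \<and> j - i + 1 \<ge> 5"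
  then obtain a b c where abc: "{a, b, c} \<subseteq> \<Sigma>" "a \<noteq> b" "a \<noteq> c" "b \<noteq> c"
    by (metis obtain_subset_with_card_n card_3_iff)
  obtain T1 where T1: "length T1 = n" "set T1 \<subseteq> {a, b, c}"
    "card (symdiff (MUS T1 (i - 1) j) (MUS T1 i j)) = 4"
    "int (card (MUS T1 (i - 1) j)) - int (card (MUS T1 i j)) = 2"
    using MUS_change_tight_symdiff_4[of i j n a b c] H abc(2-4) by blast
  obtain T2 where T2: "length T2 = n" "set T2 \<subseteq> {a, b}"
    "int (card (MUS T2 (i - 1) j)) - int (card (MUS T2 i j)) = -1"
    using MUS_change_tight_diff_minus_1[of i j n a b] H abc(2) by blast
  show "\<exists>T. length T = n \<and> set T \<subseteq> \<Sigma> \<and> card (symdiff (MUS T (i - 1) j) (MUS T i j)) = 4"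
    and "\<exists>T. length T = n \<and> set T \<subseteq> \<Sigma> \<and> int (card (MUS T (i - 1) j)) - int (card (MUS T i j)) = 2"
    and "\<exists>T. length T = n \<and> set T \<subseteq> \<Sigma> \<and> int (card (MUS T (i - 1) j)) - int (card (MUS T i j)) = -1"
    using T1 T2 abc(1) by blast+
qed

end
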